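(* (1) $\ker(d:\mathfrak{tder}_2\to\mathfrak{tder}_3)=k\,r\oplus k\,t$, where $r=(y,0)$ and $t=(y,x)$. (2) $\ker(d:\mathfrak{tder}_3\to\mathfrak{tder}_4)/\mathrm{im}(d:\mathfrak{tder}_2\to\mathfrak{tder}_3)$ is one-dimensional, spanned by the class of $(0,[z,x],0)$.
   Context: $k$ is a field of characteristic zero; $\mathfrak{lie}_n$ is the degree completion of the free Lie algebra over $k$ on $x_1,\dots,x_n$ (written $x,y$ for $n=2$; $x,y,z$ for $n=3$; $x,y,z,w$ for $n=4$). $\mathfrak{tder}_n$ is the Lie algebra of derivations $u$ of $\mathfrak{lie}_n$ such that $u(x_i)=[x_i,a_i]$ for some $a_i\in\mathfrak{lie}_n$, $i=1,\dots,n$; $u$ is written $u=(a_1,\dots,a_n)$, the $a_i$ being normalized so that $a_i$ has zero coefficient of $x_i$ in degree one (this makes the tuple unique). Thus $r=(y,0)$ is the derivation $x\mapsto[x,y]$, $y\mapsto 0$, and $t=(y,x)$ is $x\mapsto[x,y]$, $y\mapsto[y,x]$. For $u=(a,b)\in\mathfrak{tder}_2$ define in $\mathfrak{tder}_3$: $u^{1,2}=(a(x,y),b(x,y),0)$, $u^{2,3}=(0,a(y,z),b(y,z))$, $u^{12,3}=(a(x+y,z),a(x+y,z),b(x+y,z))$, $u^{1,23}=(a(x,y+z),b(x,y+z),b(x,y+z))$, and $du=u^{2,3}-u^{12,3}+u^{1,23}-u^{1,2}$. For $u=(a,b,c)\in\mathfrak{tder}_3$ define in $\mathfrak{tder}_4$: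 $u^{1,2,3}=(a(x,y,z),b(x,y,z),c(x,y,z),0)$, $u^{2,3,4}=(0,a(y,z,w),b(y,z,w),c(y,z,w))$, $u^{12,3,4}=(a,a,b,c)$ each evaluated at $(x+y,z,w)$, $u^{1,23,4}=(a,b,b,c)$ each evaluated at $(x,y+z,w)$, $u^{1,2,34}=(a,b,c,c)$ each evaluated at $(x,y,z+w)$, and $du=u^{2,3,4}-u^{12,3,4}+u^{1,23,4}-u^{1,2,34}+u^{1,2,3}$. *)

theory Defs
  imports Main
begin

text \<open>Noncommutative formal power series over k in variables x_0, x_1, ... :
  a series is its coefficient function on words (lists of variable indices).
  Variables: x = 0, y = 1, z = 2, w = 3.\<close>

type_synonym 'k ser = "nat list \<Rightarrow> 'k"

definition szero :: "'k::field_char_0 ser" where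
  "szero = (\<lambda>w. 0)"

definition gen :: "nat \<Rightarrow> 'k::field_char_0 ser" where
  "gen i = (\<lambda>w. if w = [i] then 1 else 0)"

definition sadd :: "'k::field_char_0 ser \<Rightarrow> 'k ser \<Rightarrow> 'k ser" where
  "sadd f g = (\<lambda>w. f w + g w)"

definition ssmul :: "'k::field_char_0 \<Rightarrow> 'k ser \<Rightarrow> 'k ser" where
  "ssmul c f = (\<lambda>w. c * f w)"

definition smul :: "'k::field_char_0 ser \<Rightarrow> 'k ser \<Rightarrow> 'k ser" where
  "smul f g = (\<lambda>w. \<Sum>j\<le>length w. f (take j w) * g (drop j w))"

definition sbr :: "'k::field_char_0 ser \<Rightarrow> 'k ser \<Rightarrow> 'k ser" where
  "sbr f g = (\<lambda>w. smul f g w - smul g f w)"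

definition hpart :: "nat \<Rightarrow> 'k::field_char_0 ser \<Rightarrow> 'k ser" where
  "hpart d f = (\<lambda>w. if length w = d then f w else 0)"

text \<open>The free Lie algebra on x_0..x_{n-1}, realized (as usual) as the Lie
  subalgebra of the free associative algebra generated by the variables.\<close>
inductive_set lie_poly :: "nat \<Rightarrow> 'k::field_char_0 ser set" for n :: nat where
  zero: "szero \<in> lie_poly n"
| gen: "i < n \<Longrightarrow> gen i \<in> lie_poly n"
| add: "f \<in> lie_poly n \<Longrightarrow> g \<in> lie_poly n \<Longrightarrow> sadd f g \<in> lie_poly n"
| smult: "f \<in> lie_poly n \<Longrightarrow> ssmul c f \<in> lie_poly n"
| br: "f \<in> lie_poly n \<Longrightarrow> g \<in> lie_poly n \<Longrightarrow> sbr f g \<in> lie_poly n"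

definition lie :: "nat \<Rightarrow> 'k::field_char_0 ser set" where
  "lie n = {f. \<forall>d. hpart d f \<in> lie_poly n}"

text \<open>tder_n, identified with normalized tuples (a_0,...,a_{n-1}) (components
  with index >= n are zero): a_i in lie_n with zero coefficient of x_i.\<close>
definition tder :: "nat \<Rightarrow> (nat \<Rightarrow> 'k::field_char_0 ser) set" where
  "tder n = {u. (\<forall>i<n. u i \<in> lie n \<and> u i [i] = 0) \<and> (\<forall>i\<ge>n. u i = szero)}"

definition tzero :: "nat \<Rightarrow> 'k::field_char_0 ser" where
  "tzero = (\<lambda>i. szero)"

definition tadd :: "(nat \<Rightarrow> 'k::field_char_0 ser) \<Rightarrow> (nat \<Rightarrow> 'k ser) \<Rightarrow> nat \<Rightarrow> 'k ser" where
  "tadd u v = (\<lambda>i. sadd (u i) (v i))"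

definition tsmul :: "'k::field_char_0 \<Rightarrow> (nat \<Rightarrow> 'k ser) \<Rightarrow> nat \<Rightarrow> 'k ser" where
  "tsmul c u = (\<lambda>i. ssmul c (u i))"

text \<open>Linear substitution: old variable x_j (j < m) is replaced by the sum of
  the new variables x_i, i \<in> phi j.\<close>
definition ren :: "nat \<Rightarrow> (nat \<Rightarrow> nat set) \<Rightarrow> 'k::field_char_0 ser \<Rightarrow> 'k ser" where
  "ren m phi f = (\<lambda>v. \<Sum>w\<in>{w. set w \<subseteq> {..<m} \<and> length w = length v}.
      f w * (\<Prod>t<length v. if v ! t \<in> phi (w ! t) then 1 else 0))"

definition cop :: "nat \<Rightarrow> (nat \<Rightarrow> nat set) \<Rightarrow> (nat \<Rightarrow> nat option)
    \<Rightarrow> (nat \<Rightarrow> 'k::field_char_0 ser) \<Rightarrow> nat \<Rightarrow> 'k ser" where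
  "cop m phi psi u = (\<lambda>i. case psi i of None \<Rightarrow> szero | Some j \<Rightarrow> ren m phi (u j))"

text \<open>d : tder_2 \<rightarrow> tder_3,  du = u^{2,3} - u^{12,3} + u^{1,23} - u^{1,2}.\<close>
definition d2 :: "(nat \<Rightarrow> 'k::field_char_0 ser) \<Rightarrow> nat \<Rightarrow> 'k ser" where
  "d2 u = (\<lambda>i w.
     cop 2 (\<lambda>j. {Suc j}) (\<lambda>i. if i = 1 then Some 0 else if i = 2 then Some 1 else None) u i w
   - cop 2 (\<lambda>j. if j = 0 then {0,1} else {2}) (\<lambda>i. if i = 0 \<or> i = 1 then Some 0 else if i = 2 then Some 1 else None) u i w
   + cop 2 (\<lambda>j. if j = 0 then {0} else {1,2}) (\<lambda>i. if i = 0 then Some 0 else if i = 1 \<or> i = 2 then Some 1 else None) u i w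
   - cop 2 (\<lambda>j. {j}) (\<lambda>i. if i = 0 then Some 0 else if i = 1 then Some 1 else None) u i w)"

text \<open>d : tder_3 \<rightarrow> tder_4,
  du = u^{2,3,4} - u^{12,3,4} + u^{1,23,4} - u^{1,2,34} + u^{1,2,3}.\<close>
definition d3 :: "(nat \<Rightarrow> 'k::field_char_0 ser) \<Rightarrow> nat \<Rightarrow> 'k ser" where
  "d3 u = (\<lambda>i w.
     cop 3 (\<lambda>j. {Suc j}) (\<lambda>i. if i = 1 then Some 0 else if i = 2 then Some 1 else if i = 3 then Some 2 else None) u i w
   - cop 3 (\<lambda>j. if j = 0 then {0,1} else if j = 1 then {2} else {3})
       (\<lambda>i. if i = 0 \<or> i = 1 then Some 0 else if i = 2 then Some 1 else if i = 3 then Some 2 else None) u i w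
   + cop 3 (\<lambda>j. if j = 0 then {0} else if j = 1 then {1,2} else {3})
       (\<lambda>i. if i = 0 then Some 0 else if i = 1 \<or> i = 2 then Some 1 else if i = 3 then Some 2 else None) u i w
   - cop 3 (\<lambda>j. if j = 0 then {0} else if j = 1 then {1} else {2,3})
       (\<lambda>i. if i = 0 then Some 0 else if i = 1 then Some 1 else if i = 2 \<or> i = 3 then Some 2 else None) u i w
   + cop 3 (\<lambda>j. {j}) (\<lambda>i. if i = 0 then Some 0 else if i = 1 then Some 1 else if i = 2 then Some 2 else None) u i w)"

definition r_der :: "nat \<Rightarrow> 'k::field_char_0 ser" where
  "r_der = (\<lambda>i. if i = 0 then gen 1 else szero)"

definition t_der :: "nat \<Rightarrow> 'k::field_char_0 ser" where
  "t_der = (\<lambda>i. if i = 0 then gen 1 else if i = 1 then gen 0 else szero)"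

definition c_der :: "nat \<Rightarrow> 'k::field_char_0 ser" where
  "c_der = (\<lambda>i. if i = 1 then sbr (gen 2) (gen 0) else szero)"

end

theory Submission
  imports Defs
begin

text \<open>Two facts about a Lie series f carry the whole argument: its coefficients vanish on
  the empty word and on words with foreign letters, and in every degree d \<noteq> 1 the sum of its
  coefficients over all words in a fixed alphabet vanishes (specialising the letters of the
  alphabet to 1 and the others to 0 is a homomorphism to the commutative ring k, so it kills
  commutators). All coface maps are relabellings of letters, which makes d2 and d3 explicit
  signed sums of relabelled coefficients; d3 \<circ> d2 = 0 is then a finite check.

  If du = 0, the outer components of this equation force u to be linear, i.e. a combination
  of r and t. For a cocycle v \<in> tder 3, the outer components are the outer components of a
  coboundary du, and v - du = (0, B, 0). The cocycle equations for (0, B, 0) make the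
  coefficients of the two-letter series H = B(x, z) equal on all words of a given length
  n \<ge> 3 that use both letters; as there are 2^n - 2 of them and their sum vanishes,
  characteristic zero forces them to vanish. What remains of B is the degree-2 part, a
  multiple of [z, x], which is not a coboundary.\<close>

section \<open>Lie series\<close>

lemma lie_poly_coeff_eq_0:
  "f \<in> lie_poly n \<Longrightarrow> \<not> set w \<subseteq> {..<n} \<or> w = [] \<Longrightarrow> f w = 0"
proof (induction arbitrary: w rule: lie_poly.induct)
  case zero then show ?case by (simp add: szero_def)
next
  case (gen i) then show ?case by (auto simp: gen_def)
next
  case (add f g) then show ?case by (simp add: sadd_def)
next
  case (smult f c) then show ?case by (simp add: ssmul_def)
next
  case (br f g)
  have "smul f g w = 0"
    if "\<And>w. \<not> set w \<subseteq> {..<n} \<or> w = [] \<Longrightarrow> f w = 0"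
       "\<And>w. \<not> set w \<subseteq> {..<n} \<or> w = [] \<Longrightarrow> g w = 0" for f g
  proof -
    have "f (take j w) * g (drop j w) = 0" for j
    proof (cases "w = []")
      case True then show ?thesis using that(1)[of "[]"] by simp
    next
      case False
      then have "\<not> set (take j w) \<subseteq> {..<n} \<or> \<not> set (drop j w) \<subseteq> {..<n}"
        using br.prems by (metis append_take_drop_id set_append Un_subset_iff)
      then show ?thesis using that by auto
    qed
    then show ?thesis unfolding smul_def by (simp add: sum.neutral)
  qed
  then have "smul f g w = 0" "smul g f w = 0" using br.IH by blast+
  then show ?case by (simp add: sbr_def)
qed

lemma lie_coeff_eq_0: "f \<in> lie n \<Longrightarrow> \<not> set w \<subseteq> {..<n} \<or> w = [] \<Longrightarrow> f w = 0"
  using lie_poly_coeff_eq_0[of "hpart (length w) f" n w] by (simp add: lie_def hpart_def)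

lemma lie_poly_homogeneous_in_lie:
  assumes "f \<in> lie_poly n" and "\<And>w. length w \<noteq> d \<Longrightarrow> f w = 0"
  shows "f \<in> lie n"
  unfolding lie_def
proof (intro CollectI allI)
  fix e
  have "hpart e f = (if e = d then f else szero)"
    using assms(2) by (auto simp: hpart_def szero_def fun_eq_iff)
  then show "hpart e f \<in> lie_poly n" using assms(1) by (simp add: lie_poly.zero)
qed

lemma szero_lie: "szero \<in> lie n"
  by (rule lie_poly_homogeneous_in_lie[where d = 0], rule lie_poly.zero, simp add: szero_def)

lemma gen_lie: "i < n \<Longrightarrow> gen i \<in> lie n"
  by (rule lie_poly_homogeneous_in_lie[OF lie_poly.gen, of _ _ 1]) (auto simp: gen_def)

lemma lie_lin:
  assumes "f \<in> lie n" "g \<in> lie n"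
  shows "(\<lambda>w. \<alpha> * f w + \<beta> * g w) \<in> lie n"
proof -
  have "hpart d (\<lambda>w. \<alpha> * f w + \<beta> * g w) = sadd (ssmul \<alpha> (hpart d f)) (ssmul \<beta> (hpart d g))"
    for d by (simp add: hpart_def sadd_def ssmul_def fun_eq_iff)
  then show ?thesis using assms by (simp add: lie_def lie_poly.add lie_poly.smult)
qed

lemma lie_scale: "f \<in> lie n \<Longrightarrow> (\<lambda>w. c * f w) \<in> lie n"
  using lie_lin[of f n f c 0] by simp

lemma lie_uminus: "f \<in> lie n \<Longrightarrow> (\<lambda>w. - f w) \<in> lie n"
  using lie_scale[of f n "-1"] by simp

lemma lie_add: "f \<in> lie n \<Longrightarrow> g \<in> lie n \<Longrightarrow> (\<lambda>w. f w + g w) \<in> lie n"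
  using lie_lin[of f n g 1 1] by simp

lemma lie_diff: "f \<in> lie n \<Longrightarrow> g \<in> lie n \<Longrightarrow> (\<lambda>w. f w - g w) \<in> lie n"
  using lie_lin[of f n g 1 "-1"] by simp

definition words_over :: "nat set \<Rightarrow> nat \<Rightarrow> nat list set" where
  "words_over S d = {w. set w \<subseteq> S \<and> length w = d}"

text \<open>The image of the degree-d part under the specialisation x_i \<mapsto> 1 for i \<in> S and
  x_i \<mapsto> 0 otherwise.\<close>
definition coeff_sum :: "nat set \<Rightarrow> nat \<Rightarrow> 'k::field_char_0 ser \<Rightarrow> 'k" where
  "coeff_sum S d f = (\<Sum>w\<in>words_over S d. f w)"

lemma coeff_sum_smul:
  assumes "finite S"
  shows "coeff_sum S d (smul f g) = (\<Sum>j\<le>d. coeff_sum S j f * coeff_sum S (d - j) g)"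
proof -
  have "coeff_sum S d (smul f g) = (\<Sum>w\<in>words_over S d. \<Sum>j\<le>d. f (take j w) * g (drop j w))"
    unfolding coeff_sum_def smul_def by (rule sum.cong) (auto simp: words_over_def)
  also have "\<dots> = (\<Sum>j\<le>d. \<Sum>w\<in>words_over S d. f (take j w) * g (drop j w))"
    by (rule sum.swap)
  also have "\<dots> = (\<Sum>j\<le>d. coeff_sum S j f * coeff_sum S (d - j) g)"
  proof (rule sum.cong[OF refl])
    fix j assume j: "j \<in> {..d}"
    have bij: "bij_betw (\<lambda>w. (take j w, drop j w)) (words_over S d)
        (words_over S j \<times> words_over S (d - j))"
      by (rule bij_betw_byWitness[where f' = "\<lambda>(a, b). a @ b"])
        (use j in \<open>auto simp: words_over_def dest: in_set_takeD in_set_dropD\<close>)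
    have "(\<Sum>w\<in>words_over S d. f (take j w) * g (drop j w))
        = (\<Sum>p\<in>words_over S j \<times> words_over S (d - j). f (fst p) * g (snd p))"
      using sum.reindex_bij_betw[OF bij, of "\<lambda>p. f (fst p) * g (snd p)"] by simp
    also have "\<dots> = coeff_sum S j f * coeff_sum S (d - j) g"
      unfolding coeff_sum_def sum_product sum.cartesian_product by (simp add: case_prod_beta)
    finally show "(\<Sum>w\<in>words_over S d. f (take j w) * g (drop j w))
        = coeff_sum S j f * coeff_sum S (d - j) g" .
  qed
  finally show ?thesis .
qed

lemma coeff_sum_sbr:
  assumes "finite S"
  shows "coeff_sum S d (sbr f g) = 0"
proof -
  have "(\<Sum>j\<le>d. coeff_sum S (d - j) g * coeff_sum S j f)
      = (\<Sum>i<Suc d. (\<lambda>j. coeff_sum S j g * coeff_sum S (d - j) f) (Suc d - Suc i))"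
    by (rule sum.cong)
      (auto simp: atMost_atLeast0 atLeast0LessThan[symmetric] intro!: arg_cong2[where f="(*)"])
  also have "\<dots> = (\<Sum>j<Suc d. coeff_sum S j g * coeff_sum S (d - j) f)"
    by (rule sum.nat_diff_reindex)
  finally show ?thesis
    by (simp add: coeff_sum_def sbr_def sum_subtractf lessThan_Suc_atMost
        coeff_sum_smul[OF assms, unfolded coeff_sum_def] mult.commute)
qed

lemma lie_poly_coeff_sum:
  "f \<in> lie_poly n \<Longrightarrow> finite S \<Longrightarrow> d \<noteq> 1 \<Longrightarrow> coeff_sum S d f = 0"
proof (induction rule: lie_poly.induct)
  case zero then show ?case by (simp add: coeff_sum_def szero_def)
next
  case (gen i)
  then have "\<forall>w\<in>words_over S d. gen i w = 0" by (auto simp: gen_def words_over_def)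
  then show ?case unfolding coeff_sum_def by (rule sum.neutral)
next
  case (add f g) then show ?case by (simp add: coeff_sum_def sadd_def sum.distrib)
next
  case (smult f c) then show ?case by (simp add: coeff_sum_def ssmul_def sum_distrib_left[symmetric])
next
  case (br f g) then show ?case by (simp add: coeff_sum_sbr)
qed

lemma lie_coeff_sum: "f \<in> lie n \<Longrightarrow> finite S \<Longrightarrow> d \<noteq> 1 \<Longrightarrow> coeff_sum S d f = 0"
  using lie_poly_coeff_sum[of "hpart d f" n S d]
  by (simp add: lie_def coeff_sum_def hpart_def words_over_def)

lemma lie_coeff_replicate: "f \<in> lie n \<Longrightarrow> d \<noteq> 1 \<Longrightarrow> f (replicate d l) = 0"
proof -
  have "words_over {l} d = {replicate d l}"
    by (auto simp: words_over_def intro: replicate_eqI)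
  then show "f \<in> lie n \<Longrightarrow> d \<noteq> 1 \<Longrightarrow> ?thesis"
    using lie_coeff_sum[of f n "{l}" d] by (simp add: coeff_sum_def)
qed

lemma lie_coeff_swap:
  assumes "f \<in> lie n"
  shows "f [i, j] = - f [j, i]"
proof (cases "i = j")
  case True
  then show ?thesis using lie_coeff_replicate[OF assms, of 2 i] by (simp add: numeral_2_eq_2)
next
  case False
  have "words_over {i, j} 2 = {[i, i], [i, j], [j, i], [j, j]}"
    by (auto simp: words_over_def numeral_2_eq_2 length_Suc_conv)
  then have "f [i, i] + f [i, j] + f [j, i] + f [j, j] = 0"
    using lie_coeff_sum[OF assms, of "{i, j}" 2] False by (simp add: coeff_sum_def add.assoc)
  moreover have "f [i, i] = 0" "f [j, j] = 0"
    using lie_coeff_replicate[OF assms, of 2] by (simp_all add: numeral_2_eq_2)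
  ultimately show ?thesis by (simp add: add_eq_0_iff2)
qed


section \<open>Relabelling letters\<close>

text \<open>Letter 9 is a sink: it lies outside the alphabets {0,..,n-1}, n \<le> 4, used here, so the
  coefficients of our Lie series vanish on words containing it, and relabelling a letter to
  9 amounts to substituting 0 for the corresponding variable.\<close>
definition relabel :: "nat list \<Rightarrow> nat \<Rightarrow> nat" where
  "relabel L i = (if i < length L then L ! i else 9)"

lemmas relabel_numeral =
  relabel_def[of _ 0] relabel_def[of _ 1] relabel_def[of _ 2] relabel_def[of _ 3]
  relabel_def[of _ "Suc 0"]

lemma relabel_sink [simp]: "length L \<le> 9 \<Longrightarrow> relabel L 9 = 9"
  by (simp add: relabel_def)

lemma relabel_comp [simp]: "length L \<le> 9 \<Longrightarrow> relabel L \<circ> relabel L' = relabel (map (relabel L) L')"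
  by (auto simp: relabel_def fun_eq_iff)

lemma sink_in_relabel: "9 \<in> set v \<Longrightarrow> length L \<le> 9 \<Longrightarrow> 9 \<in> set (map (relabel L) v)"
  by (metis image_eqI list.set_map relabel_sink)

definition gen_sum :: "nat set \<Rightarrow> 'k::field_char_0 ser" where
  "gen_sum A = (\<lambda>v. if \<exists>i\<in>A. v = [i] then 1 else 0)"

lemma gen_sum_lie_poly: "finite A \<Longrightarrow> A \<subseteq> {..<m} \<Longrightarrow> gen_sum A \<in> lie_poly m"
proof (induction A rule: finite_induct)
  case empty
  have "gen_sum {} = szero" by (simp add: gen_sum_def szero_def)
  then show ?case using lie_poly.zero by metis
next
  case (insert i A)
  have "gen_sum (insert i A) = sadd (gen i) (gen_sum A)"
    using insert by (auto simp: gen_sum_def sadd_def gen_def fun_eq_iff)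
  then show ?case using insert lie_poly.add lie_poly.gen by (metis insert_subset lessThan_iff)
qed

text \<open>Relabelling the coefficients of f is the substitution x_j \<mapsto> \<Sum>_{L!i = j} x_i, an algebra
  homomorphism.\<close>
lemma lie_poly_relabel:
  assumes "f \<in> lie_poly n" "n \<le> 9" "\<forall>i<length L. L ! i < n \<or> L ! i = 9"
    "\<forall>i<length L. m \<le> i \<longrightarrow> L ! i = 9"
  shows "(\<lambda>v. f (map (relabel L) v)) \<in> lie_poly m"
  using assms
proof (induction rule: lie_poly.induct)
  case zero
  have "(\<lambda>v. szero (map (relabel L) v)) = szero" by (simp add: szero_def)
  then show ?case using lie_poly.zero by metis
next
  case (gen j)
  let ?A = "{i. i < length L \<and> L ! i = j}"
  have "(\<lambda>v. gen j (map (relabel L) v)) = gen_sum ?A"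
  proof
    fix v
    have "(map (relabel L) v = [j]) = (\<exists>i\<in>?A. v = [i])"
      using gen by (cases v) (auto simp: relabel_def)
    then show "gen j (map (relabel L) v) = gen_sum ?A v" by (simp add: gen_def gen_sum_def)
  qed
  moreover have "?A \<subseteq> {..<m}" using gen by (auto simp: not_less[symmetric])
  moreover have "finite ?A" by simp
  ultimately show ?case using gen_sum_lie_poly[of ?A m] by metis
next
  case (add f g)
  then show ?case using lie_poly.add[of "\<lambda>v. f (map (relabel L) v)"] by (simp add: sadd_def)
next
  case (smult f c)
  then show ?case using lie_poly.smult[of "\<lambda>v. f (map (relabel L) v)"] by (simp add: ssmul_def)
next
  case (br f g)
  have "(\<lambda>v. sbr f g (map (relabel L) v))
      = sbr (\<lambda>v. f (map (relabel L) v)) (\<lambda>v. g (map (relabel L) v))"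
    by (simp add: sbr_def smul_def fun_eq_iff take_map drop_map)
  then show ?case using br lie_poly.br by metis
qed

lemma lie_relabel:
  assumes "f \<in> lie n" "n \<le> 9" "\<forall>i<length L. L ! i < n \<or> L ! i = 9"
    "\<forall>i<length L. m \<le> i \<longrightarrow> L ! i = 9"
  shows "(\<lambda>v. f (map (relabel L) v)) \<in> lie m"
  unfolding lie_def
proof (intro CollectI allI)
  fix d
  have "hpart d (\<lambda>v. f (map (relabel L) v)) = (\<lambda>v. hpart d f (map (relabel L) v))"
    by (simp add: hpart_def fun_eq_iff)
  moreover have "hpart d f \<in> lie_poly n" using assms(1) by (simp add: lie_def)
  ultimately show "hpart d (\<lambda>v. f (map (relabel L) v)) \<in> lie_poly m"
    using lie_poly_relabel assms(2-4) by metis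
qed

lemma lie_relabel_id:
  assumes "f \<in> lie n" "n \<le> length L" "length L \<le> 9"
    "\<forall>i<length L. L ! i = (if i < n then i else 9)"
  shows "f (map (relabel L) v) = f v"
proof (cases "set v \<subseteq> {..<n}")
  case True
  have "map (relabel L) v = v"
    by (rule map_idI) (use True assms(2,4) in \<open>auto simp: relabel_def\<close>)
  then show ?thesis by simp
next
  case False
  then obtain x where x: "x \<in> set v" "\<not> x < n" by auto
  then have "relabel L x = 9" using assms(4) by (auto simp: relabel_def)
  then have "9 \<in> set (map (relabel L) v)" using x by force
  then have "\<not> set (map (relabel L) v) \<subseteq> {..<n}" using assms(2,3) by auto
  then show ?thesis using lie_coeff_eq_0[OF assms(1)] False by metis
qed

lemma lie_relabel_one_letter:
  assumes "f \<in> lie n" "n \<le> 9" "set L \<subseteq> {l, 9}" "length L \<le> 9" "length w \<noteq> 1"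
  shows "f (map (relabel L) w) = 0"
proof (cases "9 \<in> set (map (relabel L) w)")
  case True
  then have "\<not> set (map (relabel L) w) \<subseteq> {..<n}" using assms(2) by auto
  then show ?thesis using lie_coeff_eq_0[OF assms(1)] by blast
next
  case False
  have "set (map (relabel L) w) \<subseteq> {l, 9}" using assms(3) by (auto simp: relabel_def dest!: nth_mem)
  with False have "\<forall>y\<in>set (map (relabel L) w). y = l" by blast
  then have "map (relabel L) w = replicate (length w) l"
    by (metis replicate_eqI length_map)
  then show ?thesis using lie_coeff_replicate[OF assms(1,5)] by simp
qed

lemma prod_indicator:
  "(\<Prod>t<(n::nat). if Q t then (1::'a::comm_semiring_1) else 0) = (if \<forall>t<n. Q t then 1 else 0)"
  by (induction n) (auto simp: less_Suc_eq)

lemma ren_eq_relabel: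
  assumes phi: "\<forall>j<m. \<forall>i. i \<in> phi j \<longleftrightarrow> i < length L \<and> L ! i = j"
    and L: "\<forall>i<length L. L ! i < m \<or> L ! i = 9" "m \<le> 9" "length L \<le> 9"
    and sink: "\<forall>v. 9 \<in> set v \<longrightarrow> f v = 0"
  shows "ren m phi f v = f (map (relabel L) v)"
proof -
  let ?I = "{w. set w \<subseteq> {..<m} \<and> length w = length v}"
  let ?w0 = "map (relabel L) v"
  have match: "(\<forall>t<length v. v ! t \<in> phi (w ! t)) \<longleftrightarrow> w = ?w0" if w: "w \<in> ?I" for w
  proof -
    have "v ! t \<in> phi (w ! t) \<longleftrightarrow> relabel L (v ! t) = w ! t" if t: "t < length v" for t
    proof -
      have "w ! t \<in> set w" using w t by simp
      then have "w ! t < m" using w by blast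
      then show ?thesis using phi L by (auto simp: relabel_def)
    qed
    then show ?thesis using w by (auto simp: list_eq_iff_nth_eq)
  qed
  have "ren m phi f v = (\<Sum>w\<in>?I. if w = ?w0 then f w else 0)"
    unfolding ren_def
    by (rule sum.cong[OF refl]) (simp add: prod_indicator match del: Set.mem_Collect_eq)
  also have "\<dots> = (if ?w0 \<in> ?I then f ?w0 else 0)"
    by (rule sum.delta) (rule finite_lists_length_eq, simp)
  also have "\<dots> = f ?w0"
  proof (cases "?w0 \<in> ?I")
    case False
    then obtain x where x: "x \<in> set ?w0" "\<not> x < m" by (auto simp del: set_map)
    then have "x = 9" using L by (auto simp: relabel_def)
    then show ?thesis using sink x by auto
  qed simp
  finally show ?thesis .
qed

lemma ren_linear: "ren m phi (\<lambda>w. f w + c * g w) v = ren m phi f v + c * ren m phi g v"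
  by (simp add: ren_def sum.distrib sum_distrib_left algebra_simps)

section \<open>The maps d2 and d3\<close>

definition sink_free :: "(nat \<Rightarrow> 'k::field_char_0 ser) \<Rightarrow> bool" where
  "sink_free u \<longleftrightarrow> (\<forall>j v. 9 \<in> set v \<longrightarrow> u j v = 0)"

lemma tder_component_lie: "u \<in> tder n \<Longrightarrow> i < n \<Longrightarrow> u i \<in> lie n"
  by (simp add: tder_def)

lemma tder_sink_free:
  assumes "u \<in> tder n" "n \<le> 9"
  shows "sink_free u"
  unfolding sink_free_def
proof (intro allI impI)
  fix j v assume v: "(9::nat) \<in> set v"
  show "u j v = 0"
  proof (cases "j < n")
    case True
    have "\<not> set v \<subseteq> {..<n}" using v assms(2) by auto
    then show ?thesis using lie_coeff_eq_0[OF tder_component_lie[OF assms(1) True]] by blast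
  next
    case False then show ?thesis using assms(1) by (simp add: tder_def szero_def)
  qed
qed

lemma ren_cofaces:
  assumes "\<forall>v. 9 \<in> set v \<longrightarrow> f v = 0"
  shows "ren 2 (\<lambda>j. {Suc j}) f v = f (map (relabel [9,0,1,9]) v)"
    and "ren 2 (\<lambda>j. if j = 0 then {0,1} else {2}) f v = f (map (relabel [0,0,1,9]) v)"
    and "ren 2 (\<lambda>j. if j = 0 then {0} else {1,2}) f v = f (map (relabel [0,1,1,9]) v)"
    and "ren 2 (\<lambda>j. {j}) f v = f (map (relabel [0,1,9,9]) v)"
    and "ren 3 (\<lambda>j. {Suc j}) f v = f (map (relabel [9,0,1,2]) v)"
    and "ren 3 (\<lambda>j. if j = 0 then {0,1} else if j = 1 then {2} else {3}) f v
      = f (map (relabel [0,0,1,2]) v)"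
    and "ren 3 (\<lambda>j. if j = 0 then {0} else if j = 1 then {1,2} else {3}) f v
      = f (map (relabel [0,1,1,2]) v)"
    and "ren 3 (\<lambda>j. if j = 0 then {0} else if j = 1 then {1} else {2,3}) f v
      = f (map (relabel [0,1,2,2]) v)"
    and "ren 3 (\<lambda>j. {j}) f v = f (map (relabel [0,1,2,9]) v)"
  by (rule ren_eq_relabel[OF _ _ _ _ assms];
      auto simp: less_Suc_eq nth_Cons' split: if_splits)+

lemma d2_apply:
  assumes "sink_free u"
  shows "d2 u i = (if i = 0 then (\<lambda>w.
        - u 0 (map (relabel [0,0,1,9]) w) + u 0 (map (relabel [0,1,1,9]) w)
        - u 0 (map (relabel [0,1,9,9]) w))
    else if i = 1 then (\<lambda>w.
        u 0 (map (relabel [9,0,1,9]) w) - u 0 (map (relabel [0,0,1,9]) w)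
        + u 1 (map (relabel [0,1,1,9]) w) - u 1 (map (relabel [0,1,9,9]) w))
    else if i = 2 then (\<lambda>w.
        u 1 (map (relabel [9,0,1,9]) w) - u 1 (map (relabel [0,0,1,9]) w)
        + u 1 (map (relabel [0,1,1,9]) w))
    else szero)"
  using assms unfolding sink_free_def d2_def cop_def
  by (simp add: ren_cofaces szero_def fun_eq_iff)

lemma d3_apply:
  assumes "sink_free u"
  shows "d3 u i = (if i = 0 then (\<lambda>w.
        - u 0 (map (relabel [0,0,1,2]) w) + u 0 (map (relabel [0,1,1,2]) w)
        - u 0 (map (relabel [0,1,2,2]) w) + u 0 (map (relabel [0,1,2,9]) w))
    else if i = 1 then (\<lambda>w.
        u 0 (map (relabel [9,0,1,2]) w) - u 0 (map (relabel [0,0,1,2]) w)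
        + u 1 (map (relabel [0,1,1,2]) w) - u 1 (map (relabel [0,1,2,2]) w)
        + u 1 (map (relabel [0,1,2,9]) w))
    else if i = 2 then (\<lambda>w.
        u 1 (map (relabel [9,0,1,2]) w) - u 1 (map (relabel [0,0,1,2]) w)
        + u 1 (map (relabel [0,1,1,2]) w) - u 2 (map (relabel [0,1,2,2]) w)
        + u 2 (map (relabel [0,1,2,9]) w))
    else if i = 3 then (\<lambda>w.
        u 2 (map (relabel [9,0,1,2]) w) - u 2 (map (relabel [0,0,1,2]) w)
        + u 2 (map (relabel [0,1,1,2]) w) - u 2 (map (relabel [0,1,2,2]) w))
    else szero)"
  using assms unfolding sink_free_def d3_def cop_def
  by (simp add: ren_cofaces szero_def fun_eq_iff)

lemma d3_linear: "d3 (tadd v (tsmul c u)) = tadd (d3 v) (tsmul c (d3 u))"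
  by (simp add: d3_def cop_def tadd_def tsmul_def sadd_def ssmul_def ren_linear szero_def
      fun_eq_iff algebra_simps split: option.split)

lemma sink_free_d2:
  assumes "sink_free u"
  shows "sink_free (d2 u)"
  unfolding sink_free_def
proof (intro allI impI)
  fix j v assume v: "(9::nat) \<in> set v"
  have "u k (map (relabel L) v) = 0" if "length L \<le> 9" for k L
    using assms sink_in_relabel[OF v that] by (simp add: sink_free_def)
  then show "d2 u j v = 0" by (simp add: d2_apply[OF assms] szero_def)
qed

lemma d3_d2:
  assumes "u \<in> tder 2"
  shows "d3 (d2 u) = tzero"
proof -
  have u: "sink_free u" using tder_sink_free[OF assms] by simp
  show ?thesis
    by (auto simp: fun_eq_iff tzero_def szero_def d3_apply[OF sink_free_d2[OF u]]
        d2_apply[OF u] relabel_numeral)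
qed

lemma d2_lie:
  assumes "u \<in> tder 2"
  shows "d2 u i \<in> lie 3"
proof -
  have "u j \<in> lie 2" for j
    using assms szero_lie by (cases "j < 2") (auto simp: tder_def)
  then have relabelled: "(\<lambda>w. u j (map (relabel [a, b, c, 9]) w)) \<in> lie 3"
    if "a \<in> {0, 1, 9}" "b \<in> {0, 1, 9}" "c \<in> {0, 1, 9}" for j a b c
    by (rule lie_relabel) (use that in \<open>auto simp: less_Suc_eq nth_Cons'\<close>)
  have sink: "sink_free u" using tder_sink_free[OF assms] by simp
  show ?thesis
    unfolding d2_apply[OF sink]
    by (auto intro!: szero_lie relabelled lie_add lie_diff lie_uminus)
qed

section \<open>The kernel of d2\<close>

lemma tder2_comp0_linear:
  assumes u: "u \<in> tder 2" and d2u: "\<forall>w. d2 u 0 w = 0"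
  shows "u 0 w = (if w = [1] then u 0 [1] else 0)"
proof -
  have sink: "sink_free u" using tder_sink_free[OF u] by simp
  have l: "u 0 \<in> lie 2" using tder_component_lie[OF u] by simp
  have nonlinear: "u 0 w = 0" if w: "length w \<noteq> 1"
  proof -
    have "d2 u 0 (map (relabel [1,2,9,9]) w) = 0" using d2u by simp
    then have "- u 0 (map (relabel [0,1,9,9]) w) + u 0 (map (relabel [1,1,9,9]) w)
        - u 0 (map (relabel [1,9,9,9]) w) = 0"
      by (simp add: d2_apply[OF sink] relabel_numeral)
    moreover have "u 0 (map (relabel [0,1,9,9]) w) = u 0 w"
      by (rule lie_relabel_id[OF l]) (auto simp: less_Suc_eq nth_Cons')
    moreover have "u 0 (map (relabel [1,1,9,9]) w) = 0" "u 0 (map (relabel [1,9,9,9]) w) = 0"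
      by (rule lie_relabel_one_letter[OF l, of _ 1]; use w in auto)+
    ultimately show ?thesis by simp
  qed
  have linear: "u 0 [j] = 0" if "j \<noteq> 1" for j
    using u lie_coeff_eq_0[OF l, of "[j]"] that by (cases "j = 0") (auto simp: tder_def)
  show ?thesis
  proof (cases "length w = 1")
    case True
    then obtain j where "w = [j]" by (auto simp: length_Suc_conv)
    then show ?thesis using linear by auto
  qed (use nonlinear in auto)
qed

lemma tder2_comp1_linear:
  assumes u: "u \<in> tder 2" and d2u: "\<forall>w. d2 u 2 w = 0"
  shows "u 1 w = (if w = [0] then u 1 [0] else 0)"
proof -
  have sink: "sink_free u" using tder_sink_free[OF u] by simp
  have l: "u 1 \<in> lie 2" using tder_component_lie[OF u] by simp
  have nonlinear: "u 1 w = 0" if w: "length w \<noteq> 1"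
  proof -
    have "d2 u 2 (map (relabel [0,1,9,9]) w) = 0" using d2u by simp
    then have "u 1 (map (relabel [9,0,9,9]) w) - u 1 (map (relabel [0,0,9,9]) w)
        + u 1 (map (relabel [0,1,9,9]) w) = 0"
      by (simp add: d2_apply[OF sink] relabel_numeral)
    moreover have "u 1 (map (relabel [0,1,9,9]) w) = u 1 w"
      by (rule lie_relabel_id[OF l]) (auto simp: less_Suc_eq nth_Cons')
    moreover have "u 1 (map (relabel [9,0,9,9]) w) = 0" "u 1 (map (relabel [0,0,9,9]) w) = 0"
      by (rule lie_relabel_one_letter[OF l, of _ 0]; use w in auto)+
    ultimately show ?thesis by simp
  qed
  have linear: "u 1 [j] = 0" if "j \<noteq> 0" for j
    using u lie_coeff_eq_0[OF l, of "[j]"] that by (cases "j = 1") (auto simp: tder_def)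
  show ?thesis
  proof (cases "length w = 1")
    case True
    then obtain j where "w = [j]" by (auto simp: length_Suc_conv)
    then show ?thesis using linear by auto
  qed (use nonlinear in auto)
qed

abbreviation rt :: "'k::field_char_0 \<Rightarrow> 'k \<Rightarrow> nat \<Rightarrow> 'k ser" where
  "rt a b \<equiv> tadd (tsmul a r_der) (tsmul b t_der)"

lemma rt_apply:
  "rt a b i w = (if i = 0 then (a + b) * gen 1 w else if i = 1 then b * gen 0 w else 0)"
  by (simp add: tadd_def tsmul_def r_der_def t_der_def sadd_def ssmul_def szero_def
      algebra_simps)

lemma rt_tder: "rt a b \<in> tder 2"
proof -
  have "rt a b 0 = (\<lambda>w. (a + b) * gen 1 w)" "rt a b 1 = (\<lambda>w. b * gen 0 w)"
    by (simp_all add: rt_apply fun_eq_iff)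
  then have "rt a b 0 \<in> lie 2" "rt a b 1 \<in> lie 2" by (auto intro!: lie_scale gen_lie)
  moreover have "rt a b i = szero" if "i \<ge> 2" for i
    using that by (simp add: rt_apply fun_eq_iff szero_def)
  moreover have "rt a b 0 [0] = 0" "rt a b 1 [1] = 0" by (auto simp: rt_apply gen_def)
  ultimately show ?thesis unfolding tder_def by (auto simp: less_2_cases_iff)
qed

lemma gen_relabel: "gen k (map (relabel L) w) = (if \<exists>j. w = [j] \<and> relabel L j = k then 1 else 0)"
  by (cases w rule: remdups_adj.cases) (auto simp: gen_def)

lemma d2_rt: "d2 (rt a b) = tzero"
proof (intro ext)
  fix i w
  have sink: "sink_free (rt a b)" using tder_sink_free[OF rt_tder] by simp
  show "d2 (rt a b) i w = tzero i w"
  proof (cases "length w = 1")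
    case False
    then have "\<forall>j. w \<noteq> [j]" by auto
    then show ?thesis by (simp add: tzero_def szero_def d2_apply[OF sink] rt_apply gen_relabel)
  next
    case True
    then obtain j where w: "w = [j]" by (auto simp: length_Suc_conv)
    have "j = 0 \<or> j = 1 \<or> j = 2 \<or> j = 3 \<or> j \<ge> 4" by auto
    then show ?thesis
      by (elim disjE) (simp_all add: w tzero_def szero_def d2_apply[OF sink] rt_apply gen_def
          relabel_def)
  qed
qed

lemma rt_eq_tzero:
  assumes "rt a b = tzero"
  shows "a = 0 \<and> b = 0"
proof -
  have "rt a b i w = 0" for i w using assms by (simp add: tzero_def szero_def)
  from this[of 1 "[0]"] this[of 0 "[1]"] show ?thesis by (simp add: rt_apply gen_def)
qed

lemma ker_d2:
  "{u \<in> (tder 2 :: (nat \<Rightarrow> 'k::field_char_0 ser) set). d2 u = tzero} = {rt a b | a b. True}"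
proof (intro set_eqI iffI)
  fix u :: "nat \<Rightarrow> 'k ser" assume "u \<in> {u \<in> tder 2. d2 u = tzero}"
  then have u: "u \<in> tder 2" and "d2 u = tzero" by auto
  then have "\<forall>w. d2 u 0 w = 0" "\<forall>w. d2 u 2 w = 0" by (auto simp: tzero_def szero_def)
  note comps = tder2_comp0_linear[OF u this(1)] tder2_comp1_linear[OF u this(2)]
  have "u = rt (u 0 [1] - u 1 [0]) (u 1 [0])"
  proof (intro ext)
    fix i w
    have "u i w = 0" if "i \<ge> 2" using u that by (simp add: tder_def szero_def)
    then show "u i w = rt (u 0 [1] - u 1 [0]) (u 1 [0]) i w"
      using comps[of w] by (auto simp: rt_apply gen_def)
  qed
  then show "u \<in> {rt a b | a b. True}" by blast
qed (use rt_tder d2_rt in blast)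


section \<open>The class of c in degree three\<close>

lemma smul_gen_gen: "smul (gen i) (gen j) w = (if w = [i, j] then 1 else 0)"
proof (cases "w = [i, j]")
  case True
  then show ?thesis by (simp add: smul_def gen_def numeral_2_eq_2)
next
  case False
  have vanish: "gen i (take k w) * gen j (drop k w) = 0" for k
  proof (rule ccontr)
    assume "gen i (take k w) * gen j (drop k w) \<noteq> 0"
    then have "take k w = [i]" "drop k w = [j]" by (auto simp: gen_def split: if_splits)
    then have "w = [i, j]" by (metis append_Cons append_Nil append_take_drop_id)
    then show False using False by simp
  qed
  have "smul (gen i) (gen j) w = 0" unfolding smul_def by (rule sum.neutral) (use vanish in blast)
  then show ?thesis using False by simp
qed

lemma sbr_gen_gen:
  "i \<noteq> j \<Longrightarrow> sbr (gen i) (gen j) w = (if w = [i, j] then 1 else if w = [j, i] then -1 else 0)"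
  by (simp add: sbr_def smul_gen_gen)

lemma sbr_gen_gen_lie:
  assumes "i < n" "j < n"
  shows "sbr (gen i) (gen j) \<in> lie n"
proof (rule lie_poly_homogeneous_in_lie[where d = 2])
  show "sbr (gen i) (gen j) \<in> lie_poly n" using assms by (intro lie_poly.br lie_poly.gen)
  show "sbr (gen i) (gen j) w = 0" if "length w \<noteq> 2" for w
  proof -
    have "w \<noteq> [i, j]" "w \<noteq> [j, i]" using that by auto
    then show ?thesis by (simp add: sbr_def smul_gen_gen)
  qed
qed

definition middle :: "'k::field_char_0 ser \<Rightarrow> nat \<Rightarrow> 'k ser" where
  "middle B = (\<lambda>i. if i = 1 then B else szero)"

lemma c_der_middle: "c_der = middle (sbr (gen 2) (gen 0))"
  by (simp add: c_der_def middle_def)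

lemma middle_tder: "B \<in> lie 3 \<Longrightarrow> B [1] = 0 \<Longrightarrow> middle B \<in> tder 3"
  using szero_lie[of 3] by (auto simp: tder_def middle_def szero_def)

lemma c_der_tder: "c_der \<in> tder 3"
  unfolding c_der_middle by (rule middle_tder) (simp_all add: sbr_gen_gen_lie sbr_gen_gen)

lemma d3_c_der: "d3 c_der = tzero"
proof (intro ext)
  fix i w
  have sink: "sink_free c_der" using tder_sink_free[OF c_der_tder] by simp
  have c_der_coeff: "c_der j v = (if j = 1 then if v = [2, 0] then 1 else if v = [0, 2] then -1 else 0
      else 0)" for j v
    by (simp add: c_der_middle middle_def sbr_gen_gen szero_def)
  show "d3 c_der i w = tzero i w"
  proof (cases "length w = 2")
    case False
    then have "map (relabel L) w \<noteq> [p, q]" for L p q by auto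
    then show ?thesis by (simp add: tzero_def szero_def d3_apply[OF sink] c_der_coeff)
  next
    case True
    then obtain p q where w: "w = [p, q]" by (auto simp: numeral_2_eq_2 length_Suc_conv)
    have "p = 0 \<or> p = 1 \<or> p = 2 \<or> p = 3 \<or> p \<ge> 4" "q = 0 \<or> q = 1 \<or> q = 2 \<or> q = 3 \<or> q \<ge> 4"
      by auto
    then show ?thesis
      by (elim disjE) (simp_all add: w tzero_def szero_def d3_apply[OF sink] c_der_coeff relabel_def)
  qed
qed

lemma c_der_not_coboundary: "\<not> (\<exists>u \<in> (tder 2 :: (nat \<Rightarrow> 'k::field_char_0 ser) set). d2 u = c_der)"
proof
  assume "\<exists>u \<in> (tder 2 :: (nat \<Rightarrow> 'k ser) set). d2 u = c_der"
  then obtain u :: "nat \<Rightarrow> 'k ser" where u: "u \<in> tder 2" and du: "d2 u = c_der" by blast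
  then have "\<forall>w. d2 u 0 w = 0" "\<forall>w. d2 u 2 w = 0" by (auto simp: c_der_middle middle_def szero_def)
  then have "u k (map (relabel L) [2, 0]) = 0" if "k = 0 \<or> k = 1" for k L
    using that tder2_comp0_linear[OF u] tder2_comp1_linear[OF u] by auto
  then have "d2 u 1 [2, 0] = 0"
    using tder_sink_free[OF u] by (simp add: d2_apply)
  moreover have "c_der 1 [2, 0] = 1" by (simp add: c_der_middle middle_def sbr_gen_gen)
  ultimately show False using du by (metis zero_neq_one)
qed

lemma middle_cocycle_relations:
  assumes B: "B \<in> lie 3" and cocycle: "d3 (middle B) = tzero"
  shows "B (map (relabel [0,1,1,9]) V) = 0"
    and "B (map (relabel [1,1,2,9]) V) = 0"
    and "B V = B (map (relabel [0,2,2,9]) V) - B (map (relabel [0,2,9,9]) V)"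
    and "B V = B (map (relabel [0,0,2,9]) V) - B (map (relabel [9,0,2,9]) V)"
proof -
  have sink: "sink_free (middle B)"
    unfolding sink_free_def middle_def
  proof (intro allI impI)
    fix j v assume "(9::nat) \<in> set v"
    then have "\<not> set v \<subseteq> {..<3}" by auto
    then show "(if j = 1 then B else szero) v = 0" using lie_coeff_eq_0[OF B] by (simp add: szero_def)
  qed
  have mid: "middle B 0 = szero" "middle B (Suc 0) = B" "middle B 2 = szero"
    by (simp_all add: middle_def)
  have d3B: "d3 (middle B) i W = 0" for i W using cocycle by (simp add: tzero_def szero_def)
  have P1: "B (map (relabel [0,1,1,2]) W) - B (map (relabel [0,1,2,2]) W)
      + B (map (relabel [0,1,2,9]) W) = 0" for W
    using d3B[of 1 W] by (simp add: d3_apply[OF sink] mid szero_def)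
  have P2: "B (map (relabel [9,0,1,2]) W) - B (map (relabel [0,0,1,2]) W)
      + B (map (relabel [0,1,1,2]) W) = 0" for W
    using d3B[of 2 W] by (simp add: d3_apply[OF sink] mid szero_def)
  have B_id: "B (map (relabel [0,1,2,9]) V) = B V"
    by (rule lie_relabel_id[OF B]) (auto simp: less_Suc_eq nth_Cons')
  show "B (map (relabel [0,1,1,9]) V) = 0"
    using P1[of "map (relabel [0,1,2,9]) V"] by (simp add: relabel_numeral)
  show "B (map (relabel [1,1,2,9]) V) = 0"
    using P2[of "map (relabel [1,2,3,9]) V"] by (simp add: relabel_numeral)
  show "B V = B (map (relabel [0,2,2,9]) V) - B (map (relabel [0,2,9,9]) V)"
    using P1[of "map (relabel [0,2,3,9]) V"] B_id by (simp add: relabel_numeral algebra_simps)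
  show "B V = B (map (relabel [0,0,2,9]) V) - B (map (relabel [9,0,2,9]) V)"
    using P2[of "map (relabel [0,1,3,9]) V"] B_id by (simp add: relabel_numeral algebra_simps)
qed

definition merge_invariant :: "'k::field_char_0 ser \<Rightarrow> bool" where
  "merge_invariant H \<longleftrightarrow> (\<forall>V. set V \<subseteq> {0,1,2} \<longrightarrow> 0 \<in> set V \<longrightarrow> 1 \<in> set V \<longrightarrow> 2 \<in> set V \<longrightarrow>
      H (map (relabel [0,1,1,9]) V) = H (map (relabel [0,0,1,9]) V))"

definition bit_word :: "nat \<Rightarrow> nat set \<Rightarrow> nat list" where
  "bit_word n S = map (\<lambda>i. if i \<in> S then 1 else 0) [0..<n]"

lemma length_bit_word [simp]: "length (bit_word n S) = n"
  by (simp add: bit_word_def)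

lemma bit_word_positions: "set U \<subseteq> {0,1} \<Longrightarrow> U = bit_word (length U) {i. i < length U \<and> U ! i = 1}"
proof (rule nth_equalityI)
  fix i assume "set U \<subseteq> {0,1}" "i < length U"
  then have "U ! i \<in> {0,1}" using nth_mem by blast
  then show "U ! i = bit_word (length U) {i. i < length U \<and> U ! i = 1} ! i"
    using \<open>i < length U\<close> by (auto simp: bit_word_def)
qed (simp add: bit_word_def)

text \<open>Colour the positions in T with 2, those in S - T with 1 and the rest with 0; the two
  relabellings in the merge invariance turn this word into bit_word n S and bit_word n T.\<close>
lemma merge_invariant_bit_word:
  assumes H: "merge_invariant H"
    and "T \<subseteq> S" "S \<subseteq> {..<n}" "t \<in> T" "s \<in> S - T" "r < n" "r \<notin> S"
  shows "H (bit_word n S) = H (bit_word n T)"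
proof -
  define V where "V = map (\<lambda>i. if i \<in> T then 2 else if i \<in> S then 1 else (0::nat)) [0..<n]"
  have "t < n" "s < n" using assms by auto
  then have "set V \<subseteq> {0,1,2}" "0 \<in> set V" "1 \<in> set V" "2 \<in> set V"
    using assms by (force simp: V_def)+
  then have "H (map (relabel [0,1,1,9]) V) = H (map (relabel [0,0,1,9]) V)"
    using H by (simp add: merge_invariant_def)
  moreover have "map (relabel [0,1,1,9]) V = bit_word n S" "map (relabel [0,0,1,9]) V = bit_word n T"
    using \<open>T \<subseteq> S\<close> by (auto simp: V_def bit_word_def relabel_def)
  ultimately show ?thesis by simp
qed

lemma merge_invariant_mixed_const:
  assumes H: "merge_invariant H"
    and U: "set U \<subseteq> {0,1}" "0 \<in> set U" "1 \<in> set U" "length U \<ge> 3"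
  shows "H U = H (bit_word (length U) {0})"
proof -
  define n where "n = length U"
  define S where "S = {i. i < n \<and> U ! i = 1}"
  have U_eq: "U = bit_word n S" using bit_word_positions[OF U(1)] by (simp add: S_def n_def)
  have S_n: "S \<subseteq> {..<n}" by (auto simp: S_def)
  obtain p where p: "p \<in> S" using U(3) unfolding S_def n_def in_set_conv_nth by blast
  obtain r where r: "r < n" "r \<notin> S" using U(2) unfolding S_def n_def in_set_conv_nth by force
  have single: "H (bit_word n S) = H (bit_word n {q})" if q: "q \<in> S" for q
  proof (cases "S = {q}")
    case False
    then obtain s where "s \<in> S - {q}" using q by blast
    then show ?thesis using merge_invariant_bit_word[OF H, of "{q}" S n q s r] q S_n r by auto
  qed simp
  show ?thesis
  proof (cases "0 \<in> S")
    case True then show ?thesis using single[OF True] U_eq by (simp add: n_def[symmetric])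
  next
    case False
    then have p0: "p \<noteq> 0" using p by metis
    have pn: "p < n" using p S_n by auto
    have "\<exists>r'\<in>{0,1,2::nat}. r' \<notin> {0,p}" by (cases "p = 1") auto
    then obtain r' where r'3: "r' \<in> {0,1,2::nat}" and r'p: "r' \<notin> {0, p}" by blast
    have r'n: "r' < n" using r'3 U(4) by (auto simp: n_def)
    have "H (bit_word n {p}) = H (bit_word n {0,p})"
      using merge_invariant_bit_word[OF H, of "{p}" "{0,p}" n p 0 r'] p0 pn r'n r'p by auto
    also have "\<dots> = H (bit_word n {0})"
      using merge_invariant_bit_word[OF H, of "{0}" "{0,p}" n 0 p r'] p0 pn r'n r'p by auto
    finally have "H (bit_word n {p}) = H (bit_word n {0})" .
    then show ?thesis using single[OF p] U_eq by (simp add: n_def[symmetric])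
  qed
qed

text \<open>The coefficients on mixed words of length n all equal this one, and the coefficient sum
  over {0,1} is 2^n - 2 times it; characteristic zero is used here.\<close>
lemma merge_invariant_mixed_eq_0:
  assumes H: "H \<in> lie 2" "merge_invariant H" and n: "n \<ge> 3"
  shows "H (bit_word n {0}) = 0"
proof -
  define e where "e = H (bit_word n {0})"
  define A where "A = words_over {0,1} n"
  define C where "C = {replicate n (0::nat), replicate n 1}"
  have A: "finite A" "card A = 2 ^ n"
    unfolding A_def words_over_def
    by (rule finite_lists_length_eq, simp) (simp add: card_lists_length_eq numeral_2_eq_2)
  have C: "C \<subseteq> A" "card C = 2" using n by (auto simp: C_def A_def words_over_def)
  have "0 = coeff_sum {0,1} n H" using lie_coeff_sum[OF H(1), of "{0,1}" n] n by simp
  also have "\<dots> = sum H (A - C) + sum H C"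
    unfolding coeff_sum_def A_def[symmetric] by (rule sum.subset_diff[OF C(1) A(1)])
  also have "sum H C = 0"
    unfolding C_def by (rule sum.neutral) (use lie_coeff_replicate[OF H(1)] n in auto)
  also have "sum H (A - C) = sum (\<lambda>_. e) (A - C)"
  proof (rule sum.cong[OF refl])
    fix x assume x: "x \<in> A - C"
    then have x01: "set x \<subseteq> {0,1}" and lx: "length x = n" by (auto simp: A_def words_over_def)
    have "0 \<in> set x"
    proof (rule ccontr)
      assume "0 \<notin> set x"
      then have "x = replicate n 1" by (intro replicate_eqI) (use x01 lx in auto)
      then show False using x by (auto simp: C_def)
    qed
    moreover have "1 \<in> set x"
    proof (rule ccontr)
      assume "1 \<notin> set x"
      then have "x = replicate n 0" by (intro replicate_eqI) (use x01 lx in auto)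
      then show False using x by (auto simp: C_def)
    qed
    ultimately show "H x = e" using merge_invariant_mixed_const[OF H(2) x01] lx n by (simp add: e_def)
  qed
  also have "\<dots> = of_nat (2 ^ n - 2) * e"
    using A C card_Diff_subset[OF finite_subset[OF C(1) A(1)] C(1)] by simp
  finally have "of_nat (2 ^ n - 2) * e = 0" by simp
  moreover have "(2::nat) ^ n - 2 \<noteq> 0"
    using power_increasing[of 2 n "2::nat"] n by simp
  ultimately show ?thesis unfolding e_def by (metis mult_eq_0_iff of_nat_eq_0_iff)
qed

lemma merge_invariant_lie_vanishes:
  assumes H: "H \<in> lie 2" "merge_invariant H" "H [0] = 0" "H [1] = 0"
    and U: "length U \<noteq> 2"
  shows "H U = 0"
proof (cases "set U \<subseteq> {0,1}")
  case False
  then have "\<not> set U \<subseteq> {..<2}" by auto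
  then show ?thesis using lie_coeff_eq_0[OF H(1)] by blast
next
  case U01: True
  show ?thesis
  proof (cases "0 \<in> set U \<and> 1 \<in> set U")
    case False
    then obtain l where l: "l \<in> {0, 1}" "set U \<subseteq> {l}" using U01 by (cases "0 \<in> set U") auto
    then have "U = replicate (length U) l" by (metis replicate_eqI singletonD subsetD)
    then show ?thesis
      using l(1) H(3,4) lie_coeff_replicate[OF H(1), of "length U" l]
      by (cases "length U = 1") (auto simp: length_Suc_conv)
  next
    case mixed: True
    then have "length U \<ge> 2"
      by (metis length_0_conv less_2_cases_iff linorder_not_le list.set(1) list.set(2)
          length_Suc_conv empty_iff insertE zero_neq_one)
    then have "length U \<ge> 3" using U by simp
    then show ?thesis
      using merge_invariant_mixed_const[OF H(2) U01] mixed merge_invariant_mixed_eq_0[OF H(1,2)]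
      by simp
  qed
qed

lemma middle_cocycle_merge_invariant:
  assumes B: "B \<in> lie 3" and cocycle: "d3 (middle B) = tzero"
  shows "merge_invariant (\<lambda>V. B (map (relabel [0,2,9,9]) V))"
  unfolding merge_invariant_def
proof (intro allI impI)
  note rel = middle_cocycle_relations[OF B cocycle]
  fix V :: "nat list" assume V: "set V \<subseteq> {0,1,2}" "0 \<in> set V" "1 \<in> set V" "2 \<in> set V"
  have "9 \<in> set (map (relabel [0,2,9,9]) V)" "9 \<in> set (map (relabel [9,0,2,9]) V)"
    using V(2,4) by (force simp: relabel_numeral)+
  then have "\<not> set (map (relabel [0,2,9,9]) V) \<subseteq> {..<3}"
    "\<not> set (map (relabel [9,0,2,9]) V) \<subseteq> {..<3}" by auto
  then have "B (map (relabel [0,2,9,9]) V) = 0" "B (map (relabel [9,0,2,9]) V) = 0"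
    using lie_coeff_eq_0[OF B] by blast+
  then show "B (map (relabel [0,2,9,9]) (map (relabel [0,1,1,9]) V))
      = B (map (relabel [0,2,9,9]) (map (relabel [0,0,1,9]) V))"
    using rel(3)[of V] rel(4)[of V] by (simp add: relabel_numeral)
qed

lemma middle_cocycle:
  assumes B: "B \<in> lie 3" and cocycle: "d3 (middle B) = tzero"
  shows "B = ssmul (B [2, 0]) (sbr (gen 2) (gen 0))"
proof -
  note rel = middle_cocycle_relations[OF B cocycle]
  define H where "H = (\<lambda>V. B (map (relabel [0,2,9,9]) V))"
  have H_lie: "H \<in> lie 2"
    unfolding H_def by (rule lie_relabel[OF B]) (auto simp: less_Suc_eq nth_Cons')
  have H_relabel: "H (map (relabel L) V) = B (map (relabel (map (relabel [0,2,9,9]) L)) V)"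
    if "length L \<le> 9" for L V
    using that by (simp add: H_def)
  have B_via_H: "B V = H (map (relabel [0,1,1,9]) V) - H (map (relabel [0,1,9,9]) V)" for V
    using rel(3)[of V] by (simp add: H_relabel relabel_numeral)
  have "merge_invariant H"
    unfolding H_def by (rule middle_cocycle_merge_invariant[OF B cocycle])
  moreover have "H [0] = 0" using rel(1)[of "[0]"] by (simp add: H_def relabel_numeral)
  moreover have "H [1] = 0" using rel(2)[of "[2]"] by (simp add: H_def relabel_numeral)
  ultimately have H_deg2: "H U = 0" if "length U \<noteq> 2" for U
    using merge_invariant_lie_vanishes[OF H_lie] that by blast
  have H_diag: "H [0, 0] = 0" "H [1, 1] = 0"
    using lie_coeff_replicate[OF H_lie, of 2] by (simp_all add: numeral_2_eq_2)
  have H_sink: "H [x, 9] = 0" "H [9, x] = 0" for x using lie_coeff_eq_0[OF H_lie] by auto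
  have H_swap: "H [0, 1] = - H [1, 0]" by (rule lie_coeff_swap[OF H_lie])
  show ?thesis
  proof
    fix V
    show "B V = ssmul (B [2, 0]) (sbr (gen 2) (gen 0)) V"
    proof (cases "length V = 2")
      case False
      then show ?thesis using B_via_H[of V] H_deg2 by (auto simp: ssmul_def sbr_gen_gen)
    next
      case True
      then obtain x y where V: "V = [x, y]" by (auto simp: numeral_2_eq_2 length_Suc_conv)
      show ?thesis
      proof (cases "x < 3 \<and> y < 3")
        case False
        then have "B V = 0" using lie_coeff_eq_0[OF B] V by auto
        moreover have "sbr (gen 2) (gen 0) V = 0" using False V by (auto simp: sbr_gen_gen)
        ultimately show ?thesis by (metis mult_zero_right ssmul_def)
      next
        case True
        then have "x = 0 \<or> x = 1 \<or> x = 2" "y = 0 \<or> y = 1 \<or> y = 2" by auto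
        then show ?thesis
          by (elim disjE) (simp_all add: V B_via_H ssmul_def sbr_gen_gen relabel_numeral
              H_diag[simplified] H_sink H_swap[simplified])
      qed
    qed
  qed
qed

text \<open>The witness: u_0 is minus the x-free part of v_0 with y, z renamed to x, y, and u_1 is
  the z-free part of v_2.\<close>
lemma tder3_cocycle_outer_coboundary:
  fixes v :: "nat \<Rightarrow> 'k::field_char_0 ser"
  assumes v: "v \<in> tder 3" and cocycle: "d3 v = tzero"
  obtains u where "u \<in> tder 2" "d2 u 0 = v 0" "d2 u 2 = v 2"
proof -
  have sink: "sink_free v" using tder_sink_free[OF v] by simp
  have eq: "d3 v k W = 0" for k W using cocycle by (simp add: tzero_def szero_def)
  have v0: "v 0 \<in> lie 3" and v2: "v 2 \<in> lie 3" using tder_component_lie[OF v] by auto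
  define u :: "nat \<Rightarrow> 'k ser" where "u = (\<lambda>i. if i = 0 then (\<lambda>V. - v 0 (map (relabel [1,2,9,9]) V))
    else if i = 1 then (\<lambda>V. v 2 (map (relabel [0,1,9,9]) V)) else szero)"
  have "(\<lambda>V. - v 0 (map (relabel [1,2,9,9]) V)) \<in> lie 2"
    by (intro lie_uminus lie_relabel[OF v0]) (auto simp: less_Suc_eq nth_Cons')
  moreover have "(\<lambda>V. v 2 (map (relabel [0,1,9,9]) V)) \<in> lie 2"
    by (rule lie_relabel[OF v2]) (auto simp: less_Suc_eq nth_Cons')
  moreover have "v 0 [1] = 0"
    using eq[of 0 "[1]"] v by (simp add: d3_apply[OF sink] relabel_def tder_def)
  moreover have "v 2 [1] = 0"
    using eq[of 3 "[2]"] v by (simp add: d3_apply[OF sink] relabel_def tder_def)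
  ultimately have u: "u \<in> tder 2"
    by (auto simp: tder_def u_def less_2_cases_iff relabel_def)
  then have u_sink: "sink_free u" using tder_sink_free by fastforce
  have u_comps: "u 0 = (\<lambda>V. - v 0 (map (relabel [1,2,9,9]) V))"
    "u (Suc 0) = (\<lambda>V. v 2 (map (relabel [0,1,9,9]) V))"
    by (simp_all add: u_def)
  have "d2 u 0 = v 0"
  proof
    fix W
    have "v 0 (map (relabel [0,1,2,9]) W) = v 0 W"
      by (rule lie_relabel_id[OF v0]) (auto simp: less_Suc_eq nth_Cons')
    then show "d2 u 0 W = v 0 W"
      using eq[of 0 "map (relabel [1,2,3,9]) W"]
      by (simp add: d2_apply[OF u_sink] d3_apply[OF sink] u_comps relabel_numeral algebra_simps)
  qed
  moreover have "d2 u 2 = v 2"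
  proof
    fix W
    have "v 2 (map (relabel [0,1,2,9]) W) = v 2 W"
      by (rule lie_relabel_id[OF v2]) (auto simp: less_Suc_eq nth_Cons')
    then show "d2 u 2 W = v 2 W"
      using eq[of 3 "map (relabel [0,1,2,9]) W"]
      by (simp add: d2_apply[OF u_sink] d3_apply[OF sink] u_comps relabel_numeral algebra_simps)
  qed
  ultimately show thesis by (rule that[OF u])
qed

lemma tder3_cocycle_cohomologous_c_der:
  fixes v :: "nat \<Rightarrow> 'k::field_char_0 ser"
  assumes v: "v \<in> tder 3" and cocycle: "d3 v = tzero"
  shows "\<exists>a. \<exists>u \<in> tder 2. v = tadd (tsmul a c_der) (d2 u)"
proof -
  obtain u where u: "u \<in> tder 2" and u0: "d2 u 0 = v 0" and u2: "d2 u 2 = v 2"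
    using tder3_cocycle_outer_coboundary[OF v cocycle] by blast
  define B where "B = (\<lambda>w. v 1 w - d2 u 1 w)"
  have B_lie: "B \<in> lie 3"
    unfolding B_def by (intro lie_diff tder_component_lie[OF v] d2_lie[OF u]) simp
  have high: "v i = szero" "d2 u i = szero" if "i \<ge> 3" for i
    using v that tder_sink_free[OF u] by (simp_all add: tder_def d2_apply)
  have middle_B: "middle B = tadd v (tsmul (-1) (d2 u))"
  proof
    fix i :: nat
    consider "i = 0" | "i = 1" | "i = 2" | "i \<ge> 3" by linarith
    then show "middle B i = tadd v (tsmul (-1) (d2 u)) i"
      by cases (simp_all add: middle_def B_def tadd_def tsmul_def sadd_def ssmul_def szero_def
          u0 u2 high)
  qed
  have "d3 (middle B) = tadd (d3 v) (tsmul (-1) (d3 (d2 u)))"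
    unfolding middle_B by (rule d3_linear)
  also have "\<dots> = tzero"
    unfolding cocycle d3_d2[OF u] by (simp add: tadd_def tsmul_def tzero_def sadd_def ssmul_def szero_def)
  finally have "d3 (middle B) = tzero" .
  then have "B = ssmul (B [2, 0]) (sbr (gen 2) (gen 0))" by (rule middle_cocycle[OF B_lie])
  then have B_eq: "B w = B [2, 0] * sbr (gen 2) (gen 0) w" for w
    by (metis ssmul_def)
  have v1: "v (Suc 0) w = B w + d2 u (Suc 0) w" for w by (simp add: B_def)
  have "v = tadd (tsmul (B [2, 0]) c_der) (d2 u)"
  proof (intro ext)
    fix i :: nat and w
    consider "i = 0" | "i = 1" | "i = 2" | "i \<ge> 3" by linarith
    then show "v i w = tadd (tsmul (B [2, 0]) c_der) (d2 u) i w"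
      by cases (simp_all add: c_der_middle middle_def tadd_def tsmul_def sadd_def ssmul_def
          szero_def u0 u2 high v1 B_eq[symmetric])
  qed
  with u show ?thesis by blast
qed

theorem theorem3p16:
  shows "{u \<in> (tder 2 :: (nat \<Rightarrow> 'k::field_char_0 ser) set). d2 u = tzero}
           = {tadd (tsmul a r_der) (tsmul b t_der) | a b. True}
    \<and> (\<forall>a b :: 'k. tadd (tsmul a r_der) (tsmul b t_der) = tzero \<longrightarrow> a = 0 \<and> b = 0)
    \<and> (\<forall>u \<in> (tder 2 :: (nat \<Rightarrow> 'k ser) set). d3 (d2 u) = tzero)
    \<and> (c_der :: nat \<Rightarrow> 'k ser) \<in> tder 3 \<and> d3 (c_der :: nat \<Rightarrow> 'k ser) = tzero
    \<and> \<not> (\<exists>u \<in> (tder 2 :: (nat \<Rightarrow> 'k ser) set). d2 u = c_der)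
    \<and> (\<forall>v \<in> (tder 3 :: (nat \<Rightarrow> 'k ser) set). d3 v = tzero \<longrightarrow>
         (\<exists>a. \<exists>u \<in> tder 2. v = tadd (tsmul a c_der) (d2 u)))"
proof (intro conjI ballI allI impI)
  show "{u \<in> (tder 2 :: (nat \<Rightarrow> 'k ser) set). d2 u = tzero} = {rt a b | a b. True}"
    by (rule ker_d2)
  show "a = 0" "b = 0" if "rt a b = (tzero :: nat \<Rightarrow> 'k ser)" for a b
    using rt_eq_tzero[OF that] by simp_all
qed (simp_all add: d3_d2 c_der_tder d3_c_der c_der_not_coboundary tder3_cocycle_cohomologous_c_der)

end
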